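(* For every positive integer $n$ and every nonnegative integer $q$, $$\left\langle\!\left\langle{n\atop q}\right\rangle\!\right\rangle=\sum_{i=0}^n(-1)^{q-i}\binom{n-i-1}{q-i}\left\{\!\left\{{n+i+1\atop i+1}\right\}\!\right\}.$$
   Context: Binomial coefficients are $\binom{a}{b}=a(a-1)\cdots(a-b+1)/b!$ for integers $b\ge0$ (any integer $a$) and $\binom{a}{b}=0$ for $b<0$. The second-order Eulerian numbers $\langle\langle{n\atop k}\rangle\rangle$ are defined by $\langle\langle{0\atop k}\rangle\rangle=1$ if $k=0$ and $0$ otherwise, $\langle\langle{n\atop k}\rangle\rangle=0$ for $k<0$, and $\langle\langle{n\atop k}\rangle\rangle=(k+1)\langle\langle{n-1\atop k}\rangle\rangle+(2n-k-1)\langle\langle{n-1\atop k-1}\rangle\rangle$ for $n\ge1$. The second-order Stirling numbers $\{\{{n\atop k}\}\}$ are the numbers of partitions of an $n$-element set into $k$ blocks each of size at least $2$; equivalently $\{\{{0\atop 0}\}\}=1$, $\{\{{n\atop k}\}\}=0$ when $n<0$ or $k\le0$ with $(n,k)\ne(0,0)$, and $\{\{{n\atop k}\}\}=k\{\{{n-1\atop k}\}\}+(n-1)\{\{{n-2\atop k-1}\}\}$ for $n\ge1$. *)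

theory Defs
  imports Main
begin

definition binom :: "int \<Rightarrow> int \<Rightarrow> int" where
  "binom a b = (if b < 0 then 0
                else (\<Prod>j<nat b. a - int j) div fact (nat b))"

fun eul2 :: "nat \<Rightarrow> int \<Rightarrow> int" where
  "eul2 0 k = (if k = 0 then 1 else 0)"
| "eul2 (Suc m) k = (if k < 0 then 0 else
     (k + 1) * eul2 m k + (2 * int (Suc m) - k - 1) * eul2 m (k - 1))"

text \<open>Second-order Stirling numbers (partitions into blocks of size at least 2).\<close>
fun stir2 :: "nat \<Rightarrow> int \<Rightarrow> int" where
  "stir2 0 k = (if k = 0 then 1 else 0)"
| "stir2 (Suc 0) k = 0"
| "stir2 (Suc (Suc m)) k = (if k \<le> 0 then 0 else
     k * stir2 (Suc m) k + int (Suc m) * stir2 m (k - 1))"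

end

theory Submission
  imports Defs "HOL-Computational_Algebra.Polynomial"
begin

text \<open>
  Both sides are the coefficients of x^q in polynomials satisfying
  E_{n+1} = (1 + 2 n x) E_n + x (1 - x) E_n' with E_1 = 1: for the left-hand side this is the
  recurrence of the second-order Eulerian numbers read on generating polynomials.  The right-hand
  side is the coefficient of x^q in
  P_n = \<Sum>_{i<n} {{n+i+1, i+1}} x^i (1 - x)^{n-1-i}.  For i + k = n - 1 the operator maps
  x^i (1 - x)^k to (i + 1) x^i (1 - x)^{k+1} + (n + i + 2) x^{i+1} (1 - x)^k, so collecting terms
  turns P_n into P_{n+1} by exactly the Stirling recurrence
  {{m+1, k}} = k {{m, k}} + m {{m-1, k-1}}.
\<close>

lemma prod_falling_eq_choose_times_fact: "(\<Prod>j<k. int n - int j) = int (n choose k) * fact k"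
proof -
  have "real_of_int (\<Prod>j<k. int n - int j) = (real n gchoose k) * fact k"
    by (simp add: gbinomial_mult_fact' atLeast0LessThan)
  also have "\<dots> = real_of_int (int (n choose k) * fact k)"
    by (simp add: binomial_gbinomial)
  finally show ?thesis
    by (rule of_int_eq_iff[THEN iffD1])
qed

lemma binom_of_nat: "binom (int n) (int k) = int (n choose k)"
  by (simp add: binom_def prod_falling_eq_choose_times_fact)

lemma stir2_eq_0: "int m < 2 * k \<Longrightarrow> stir2 m k = 0"
  by (induction m k rule: stir2.induct) simp_all

lemma stir2_Suc_0: "stir2 (Suc m) 0 = 0"
  by (cases m) simp_all

lemma stir2_one: "m \<ge> 2 \<Longrightarrow> stir2 m 1 = 1"
proof (induction m rule: nat_induct_at_least)
  case (Suc m)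
  then obtain l where "m = Suc (Suc l)"
    by (metis add_2_eq_Suc le_Suc_ex)
  then show ?case
    using Suc by (simp add: stir2_Suc_0)
qed (simp add: numeral_2_eq_2)

lemma eul2_neg: "k < 0 \<Longrightarrow> eul2 n k = 0"
  by (cases n) simp_all

lemma pderiv_sum: "pderiv (sum f A) = (\<Sum>x\<in>A. pderiv (f x))"
  using higher_pderiv_sum[of 1 f A] by simp

text \<open>With m = 2 n this maps the generating polynomial of row n of the second-order Eulerian
  numbers to that of row n + 1.\<close>
definition eul2_op :: "nat \<Rightarrow> 'a::idom poly \<Rightarrow> 'a poly" where
  "eul2_op m p = (1 + of_nat m * [:0, 1:]) * p + [:0, 1:] * [:1, -1:] * pderiv p"

lemma eul2_op_sum:
  "eul2_op m (\<Sum>i\<in>S. smult (c i) (p i)) = (\<Sum>i\<in>S. smult (c i) (eul2_op m (p i)))"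
  by (simp add: eul2_op_def sum_distrib_left pderiv_sum pderiv_smult sum.distrib smult_add_right)

lemma eul2_op_pCons:
  "eul2_op m p = p + smult (of_nat m) (pCons 0 p) + pCons 0 (pderiv p) - pCons 0 (pCons 0 (pderiv p))"
proof -
  have X: "[:0, 1:] * q = pCons 0 q" for q :: "'a poly"
    by (simp add: one_pCons[symmetric])
  show ?thesis
    by (simp add: eul2_op_def distrib_right of_nat_poly mult.assoc X algebra_simps)
qed

lemma coeff_eul2_op_0: "coeff (eul2_op m p) 0 = coeff p 0"
  by (simp add: eul2_op_pCons)

lemma coeff_eul2_op_Suc:
  "coeff (eul2_op m p) (Suc r) = of_nat (r + 2) * coeff p (Suc r) + (of_nat m - of_nat r) * coeff p r"
  by (cases r) (simp_all add: eul2_op_pCons coeff_pderiv algebra_simps)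

lemma pderiv_power_mult_power:
  "p * q * pderiv (p ^ i * q ^ k) =
     smult (of_nat i) (p ^ i * q ^ Suc k * pderiv p) + smult (of_nat k) (p ^ Suc i * q ^ k * pderiv q)"
proof -
  have power: "p * pderiv (p ^ n) = smult (of_nat n) (p ^ n * pderiv p)" for p :: "'a poly" and n
    by (cases n) (simp_all add: pderiv_power_Suc del: power_Suc, simp add: mult_ac)
  have "p * q * pderiv (p ^ i * q ^ k) = q ^ k * q * (p * pderiv (p ^ i)) + p ^ i * p * (q * pderiv (q ^ k))"
    by (simp add: pderiv_mult algebra_simps)
  then show ?thesis
    by (simp add: power mult_ac)
qed

lemma eul2_op_basis:
  "eul2_op m ([:0, 1:] ^ i * [:1, -1:] ^ k :: 'a::idom poly) =
     smult (of_nat (i + 1)) ([:0, 1:] ^ i * [:1, -1:] ^ Suc k)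
     + smult (of_nat m + 1 - of_nat k) ([:0, 1:] ^ Suc i * [:1, -1:] ^ k)"
proof -
  define X Y where "X = ([:0, 1:] :: 'a poly)" and "Y = ([:1, -1:] :: 'a poly)"
  have "X + Y = 1" and "pderiv X = 1" and "pderiv Y = -1"
    unfolding X_def Y_def by (simp_all add: pderiv_pCons one_pCons)
  have "eul2_op m (X ^ i * Y ^ k) = (1 + of_nat m * X) * (X ^ i * Y ^ k) + X * Y * pderiv (X ^ i * Y ^ k)"
    unfolding eul2_op_def X_def Y_def ..
  also have "\<dots> = (X + Y + of_nat m * X) * (X ^ i * Y ^ k) + X * Y * pderiv (X ^ i * Y ^ k)"
    by (simp only: \<open>X + Y = 1\<close>)
  also have "\<dots> = (X + Y + of_nat m * X) * (X ^ i * Y ^ k)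
      + smult (of_nat i) (X ^ i * Y ^ Suc k) - smult (of_nat k) (X ^ Suc i * Y ^ k)"
    using pderiv_power_mult_power[of X Y i k] \<open>pderiv X = 1\<close> \<open>pderiv Y = -1\<close> by simp
  also have "\<dots> = smult (of_nat (i + 1)) (X ^ i * Y ^ Suc k) + smult (of_nat m + 1 - of_nat k) (X ^ Suc i * Y ^ k)"
    by (simp add: algebra_simps smult_add_left smult_diff_left of_nat_poly)
  finally show ?thesis
    unfolding X_def Y_def .
qed

lemma coeff_basis:
  "coeff ([:0, 1:] ^ i * [:1, -1:] ^ k :: 'a::comm_ring_1 poly) q =
     (if i \<le> q then (-1) ^ (q - i) * of_nat (k choose (q - i)) else 0)"
proof -
  have "coeff ([:1, -1:] ^ k :: 'a poly) j = (-1) ^ j * of_nat (k choose j)" for j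
  proof (cases "j \<le> k")
    case True
    then show ?thesis
      by (simp add: coeff_linear_poly_power mult_ac)
  next
    case False
    then have "coeff ([:1, -1:] ^ k :: 'a poly) j = 0"
      by (intro coeff_eq_0 le_less_trans[OF degree_power_le]) simp
    then show ?thesis
      using False by (simp add: binomial_eq_0)
  qed
  then show ?thesis
    by (simp add: monom_altdef[of 1 i, simplified, symmetric] coeff_monom_mult)
qed

lemma signed_binom_eq_coeff:
  "(-1) ^ nat \<bar>int q - int i\<bar> * binom (int k) (int q - int i) =
     coeff ([:0, 1:] ^ i * [:1, -1:] ^ k :: int poly) q"
proof (cases "i \<le> q")
  case True
  then have "int q - int i = int (q - i)"
    by simp
  then show ?thesis
    unfolding coeff_basis using True by (simp only: binom_of_nat nat_int abs_of_nat) simp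
qed (simp add: coeff_basis binom_def)

lemma eul2_op_row_basis:
  assumes "i < n"
  shows "eul2_op (2 * n) ([:0, 1:] ^ i * [:1, -1:] ^ (n - Suc i) :: 'a::idom poly) =
     smult (of_nat (i + 1)) ([:0, 1:] ^ i * [:1, -1:] ^ (n - i))
     + smult (of_nat (n + i + 2)) ([:0, 1:] ^ Suc i * [:1, -1:] ^ (n - Suc i))"
  using assms eul2_op_basis[where 'a = 'a, of "2 * n" i "n - Suc i"]
  by (simp add: Suc_diff_Suc of_nat_diff ac_simps)

definition stir2_poly :: "nat \<Rightarrow> int poly" where
  "stir2_poly n =
     (\<Sum>i<n. smult (stir2 (n + i + 1) (int i + 1)) ([:0, 1:] ^ i * [:1, -1:] ^ (n - 1 - i)))"

lemma stir2_poly_Suc: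
  assumes "n \<ge> 1"
  shows "stir2_poly (Suc n) = eul2_op (2 * n) (stir2_poly n)"
proof -
  define a where "a i = stir2 (n + i + 1) (int i + 1)" for i
  define B where "B i k = ([:0, 1:] ^ i * [:1, -1:] ^ k :: int poly)" for i k
  have "stir2_poly (Suc n) = smult (stir2 (Suc n + 0 + 1) (int 0 + 1)) (B 0 (Suc n - 1 - 0))
      + (\<Sum>i<n. smult (stir2 (Suc n + Suc i + 1) (int (Suc i) + 1)) (B (Suc i) (Suc n - 1 - Suc i)))"
    unfolding stir2_poly_def B_def by (rule sum.lessThan_Suc_shift)
  also have "\<dots> = smult (a 0) (B 0 n)
      + (\<Sum>i<n. smult (a (Suc i) * int (i + 2) + a i * int (n + i + 2)) (B (Suc i) (n - Suc i)))"
  proof -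
    have "stir2 (Suc n + 0 + 1) (int 0 + 1) = a 0"
      using assms by (simp add: a_def stir2_one del: stir2.simps)
    moreover have "stir2 (Suc n + Suc i + 1) (int (Suc i) + 1) = a (Suc i) * int (i + 2) + a i * int (n + i + 2)" for i
      using stir2.simps(3)[of "n + i + 1" "int i + 2"] by (simp add: a_def algebra_simps)
    ultimately show ?thesis
      by (simp del: stir2.simps)
  qed
  also have "\<dots> = (\<Sum>i<Suc n. smult (a i * int (i + 1)) (B i (n - i)))
      + (\<Sum>i<n. smult (a i * int (n + i + 2)) (B (Suc i) (n - Suc i)))"
    by (simp add: sum.lessThan_Suc_shift smult_add_left sum.distrib add.assoc del: sum.lessThan_Suc)
  also have "\<dots> = (\<Sum>i<n. smult (a i * int (i + 1)) (B i (n - i)))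
      + (\<Sum>i<n. smult (a i * int (n + i + 2)) (B (Suc i) (n - Suc i)))"
  proof -
    have "a n = 0"
      unfolding a_def by (rule stir2_eq_0) simp
    then show ?thesis
      by simp
  qed
  also have "\<dots> = (\<Sum>i<n. smult (a i) (eul2_op (2 * n) (B i (n - 1 - i))))"
    by (simp add: B_def eul2_op_row_basis smult_add_right sum.distrib)
  also have "\<dots> = eul2_op (2 * n) (stir2_poly n)"
    unfolding stir2_poly_def a_def B_def by (rule eul2_op_sum[symmetric])
  finally show ?thesis .
qed

lemma eul2_eq_coeff_stir2_poly:
  assumes "n \<ge> 1"
  shows "eul2 n (int q) = coeff (stir2_poly n) q"
  using assms
proof (induction n arbitrary: q rule: nat_induct_at_least)
  case base
  then show ?case
    by (cases q) (simp_all add: stir2_poly_def)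
next
  case (Suc n)
  show ?case
  proof (cases q)
    case 0
    then show ?thesis
      using Suc.IH[of 0] by (simp add: stir2_poly_Suc[OF Suc.hyps] coeff_eul2_op_0 eul2_neg)
  next
    case (Suc r)
    then show ?thesis
      using Suc.IH[of r] Suc.IH[of "Suc r"]
      by (simp add: stir2_poly_Suc[OF Suc.hyps] coeff_eul2_op_Suc algebra_simps)
  qed
qed

theorem corollary5:
  fixes n q :: nat
  assumes "n \<ge> 1"
  shows "eul2 n (int q) =
    (\<Sum>i=0..n. (-1) ^ nat \<bar>int q - int i\<bar> * binom (int n - int i - 1) (int q - int i)
                  * stir2 (n + i + 1) (int i + 1))"
proof -
  define f where "f i = (-1) ^ nat \<bar>int q - int i\<bar> * binom (int n - int i - 1) (int q - int i)
                  * stir2 (n + i + 1) (int i + 1)" for i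
  have "f n = 0"
    unfolding f_def using stir2_eq_0[of "n + n + 1" "int n + 1"] by simp
  then have "(\<Sum>i=0..n. f i) = (\<Sum>i<n. f i)"
    by (simp add: atLeast0AtMost lessThan_Suc_atMost[symmetric])
  also have "\<dots> = (\<Sum>i<n. stir2 (n + i + 1) (int i + 1) * coeff ([:0, 1:] ^ i * [:1, -1:] ^ (n - 1 - i)) q)"
  proof (rule sum.cong[OF refl])
    fix i
    assume "i \<in> {..<n}"
    then have "int n - int i - 1 = int (n - 1 - i)"
      by auto
    show "f i = stir2 (n + i + 1) (int i + 1) * coeff ([:0, 1:] ^ i * [:1, -1:] ^ (n - 1 - i)) q"
      unfolding f_def \<open>int n - int i - 1 = int (n - 1 - i)\<close> signed_binom_eq_coeff by (rule mult.commute)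
  qed
  also have "\<dots> = eul2 n (int q)"
    by (simp add: eul2_eq_coeff_stir2_poly[OF assms] stir2_poly_def coeff_sum)
  finally show ?thesis
    unfolding f_def ..
qed

end
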